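(* Let $N\ge 2$ be an integer and let $\boldsymbol{A}=(A_1,\dots,A_N)$, $\boldsymbol{B}=(B_1,\dots,B_N)$ be probability vectors ($A_i,B_i\ge 0$, $\sum_iA_i=\sum_iB_i=1$), and put $S_i=A_i+B_i$. If $S_i>1$ for some $i$, then no joint selection probability matrix achieves loss $L=0$. Moreover, if $\max_i S_i=S_N>1$, then $$L_{\min}=\frac{N}{2(N-1)}(S_N-1)^2,$$ and this minimum is attained by the matrix $\tilde{\boldsymbol P}=(\tilde p_{i,j})$ given by $\tilde p_{i,j}=0$ if $i\ne N$ and $j\ne N$, $\tilde p_{i,N}=A_i+\epsilon$ for $i=1,\dots,N-1$, $\tilde p_{N,j}=B_j+\epsilon$ for $j=1,\dots,N-1$, $\tilde p_{N,N}=0$, where $\epsilon=\frac{S_N-1}{2(N-1)}$.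
   Context: A joint selection probability matrix is an $N\times N$ real matrix $\boldsymbol{P}=(p_{i,j})$ with $p_{i,i}=0$ for all $i$, $p_{i,j}\ge 0$ for all $i,j$, and $\sum_{i,j}p_{i,j}=1$. The satisfied preferences are $\pi_A(i)=\sum_j p_{i,j}$ and $\pi_B(j)=\sum_i p_{i,j}$, the loss is $L(\boldsymbol P)=\sum_i(\pi_A(i)-A_i)^2+\sum_j(\pi_B(j)-B_j)^2$, and $L_{\min}$ is the minimum of $L$ over all joint selection probability matrices. *)

theory Defs
  imports Main "HOL.Real"
begin

text \<open>Indices range over {1..N}; matrices are functions nat \<Rightarrow> nat \<Rightarrow> real,
  vectors are functions nat \<Rightarrow> real (values outside {1..N} are irrelevant).\<close>

definition jsp_matrix :: "nat \<Rightarrow> (nat \<Rightarrow> nat \<Rightarrow> real) \<Rightarrow> bool" where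
  "jsp_matrix N P \<longleftrightarrow>
     (\<forall>i\<in>{1..N}. P i i = 0) \<and>
     (\<forall>i\<in>{1..N}. \<forall>j\<in>{1..N}. P i j \<ge> 0) \<and>
     (\<Sum>i=1..N. \<Sum>j=1..N. P i j) = 1"

definition piA :: "nat \<Rightarrow> (nat \<Rightarrow> nat \<Rightarrow> real) \<Rightarrow> nat \<Rightarrow> real" where
  "piA N P i = (\<Sum>j=1..N. P i j)"

definition piB :: "nat \<Rightarrow> (nat \<Rightarrow> nat \<Rightarrow> real) \<Rightarrow> nat \<Rightarrow> real" where
  "piB N P j = (\<Sum>i=1..N. P i j)"

definition loss :: "nat \<Rightarrow> (nat \<Rightarrow> real) \<Rightarrow> (nat \<Rightarrow> real) \<Rightarrow> (nat \<Rightarrow> nat \<Rightarrow> real) \<Rightarrow> real" where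
  "loss N A B P = (\<Sum>i=1..N. (piA N P i - A i)^2) + (\<Sum>j=1..N. (piB N P j - B j)^2)"

definition Lmin :: "nat \<Rightarrow> (nat \<Rightarrow> real) \<Rightarrow> (nat \<Rightarrow> real) \<Rightarrow> real" where
  "Lmin N A B = Inf {loss N A B P | P. jsp_matrix N P}"

end

theory Submission
  imports Defs "HOL-Analysis.Convex"
begin

(* Row k and column k of a joint selection probability matrix meet only in the vanishing
   diagonal entry, so pi_A(k) + pi_B(k) <= 1 and S_k > 1 forces a nonzero residual at k.
   As marginals and targets both sum to 1, the residuals pi_A(i) - A_i at the indices i ~= k
   sum to minus the residual u at k, so by the quadratic-mean inequality their squares add up
   to at least u^2/(N-1); likewise for the column residual v. Hence
   L >= N/(N-1) (u^2 + v^2) >= N/(2(N-1)) (u + v)^2 with u + v >= S_k - 1. Equality holds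
   throughout for the matrix supported on row and column k that spreads the excess evenly,
   raising every off-diagonal entry there by epsilon above its target. *)

lemma sum_eq_0_imp_card_mult_square_le:
  fixes d :: "'a \<Rightarrow> real"
  assumes "finite I" "k \<in> I" "(\<Sum>i\<in>I. d i) = 0"
  shows "real (card I) * (d k)\<^sup>2 \<le> (real (card I) - 1) * (\<Sum>i\<in>I. (d i)\<^sup>2)"
proof -
  have "(\<Sum>i\<in>I - {k}. d i) = - d k"
    using assms sum.remove[of I k d] by simp
  moreover have "real (card (I - {k})) = real (card I) - 1"
    using card.remove[OF assms(1,2)] by simp
  ultimately have cs: "(d k)\<^sup>2 \<le> (real (card I) - 1) * (\<Sum>i\<in>I - {k}. (d i)\<^sup>2)"
    using sum_squared_le_sum_of_squares[of d "I - {k}"] by (simp add: mult.commute)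
  have "(\<Sum>i\<in>I. (d i)\<^sup>2) = (d k)\<^sup>2 + (\<Sum>i\<in>I - {k}. (d i)\<^sup>2)"
    using assms by (simp add: sum.remove)
  with cs show ?thesis by (simp add: algebra_simps)
qed

lemma sum_if_eq_else:
  fixes f :: "'a \<Rightarrow> real"
  assumes "finite I" "k \<in> I"
  shows "(\<Sum>i\<in>I. if i = k then x else f i) = x + (\<Sum>i\<in>I. f i) - f k"
  using assms by (simp add: sum.delta_remove sum_diff1)

lemma jsp_sum_piA: "jsp_matrix N P \<Longrightarrow> (\<Sum>i=1..N. piA N P i) = 1"
  unfolding jsp_matrix_def piA_def by simp

lemma jsp_sum_piB: "jsp_matrix N P \<Longrightarrow> (\<Sum>j=1..N. piB N P j) = 1"
  unfolding jsp_matrix_def piB_def by (subst sum.swap) simp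

lemma piB_eq_piA_transpose: "piB N P j = piA N (\<lambda>i j. P j i) j"
  unfolding piA_def piB_def ..

lemma jsp_piA_plus_piB_le_1:
  assumes P: "jsp_matrix N P" and k: "k \<in> {1..N}"
  shows "piA N P k + piB N P k \<le> 1"
proof -
  have "piB N P k = P k k + (\<Sum>i\<in>{1..N} - {k}. P i k)"
    unfolding piB_def using k by (simp add: sum.remove)
  also have "\<dots> \<le> (\<Sum>i\<in>{1..N} - {k}. piA N P i)"
    using P k unfolding jsp_matrix_def piA_def
    by (auto intro!: sum_mono member_le_sum)
  also have "\<dots> = 1 - piA N P k"
    using jsp_sum_piA[OF P] k sum.remove[of "{1..N}" k "piA N P"] by simp
  finally show ?thesis by simp
qed

lemma loss_eq_0_iff:
  "loss N A B P = 0 \<longleftrightarrow> (\<forall>i\<in>{1..N}. piA N P i = A i \<and> piB N P i = B i)"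
  unfolding loss_def by (simp add: add_nonneg_eq_0_iff sum_nonneg sum_nonneg_eq_0_iff ball_conj_distrib)

lemma loss_lower_bound:
  assumes P: "jsp_matrix N P" and k: "k \<in> {1..N}" and N: "N \<ge> 2"
    and Asum: "(\<Sum>i=1..N. A i) = 1" and Bsum: "(\<Sum>i=1..N. B i) = 1"
    and excess: "A k + B k \<ge> 1"
  shows "real N / (2 * (real N - 1)) * (A k + B k - 1)\<^sup>2 \<le> loss N A B P"
proof -
  define u where "u = A k - piA N P k"
  define v where "v = B k - piB N P k"
  have "(\<Sum>i=1..N. piA N P i - A i) = 0"
    using jsp_sum_piA[OF P] Asum by (simp add: sum_subtractf)
  then have rows: "real N * u\<^sup>2 \<le> (real N - 1) * (\<Sum>i=1..N. (piA N P i - A i)\<^sup>2)"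
    using sum_eq_0_imp_card_mult_square_le[of "{1..N}" k "\<lambda>i. piA N P i - A i"] k
    by (simp add: u_def power2_commute[of "A k"])
  have "(\<Sum>i=1..N. piB N P i - B i) = 0"
    using jsp_sum_piB[OF P] Bsum by (simp add: sum_subtractf)
  then have cols: "real N * v\<^sup>2 \<le> (real N - 1) * (\<Sum>i=1..N. (piB N P i - B i)\<^sup>2)"
    using sum_eq_0_imp_card_mult_square_le[of "{1..N}" k "\<lambda>i. piB N P i - B i"] k
    by (simp add: v_def power2_commute[of "B k"])
  have "A k + B k - 1 \<le> u + v"
    using jsp_piA_plus_piB_le_1[OF P k] by (simp add: u_def v_def)
  then have "(A k + B k - 1)\<^sup>2 \<le> (u + v)\<^sup>2"
    using excess by (intro power_mono) auto
  also have "\<dots> = 2 * (u\<^sup>2 + v\<^sup>2) - (u - v)\<^sup>2"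
    by (simp add: power2_eq_square algebra_simps)
  also have "\<dots> \<le> 2 * (u\<^sup>2 + v\<^sup>2)"
    by simp
  finally have "real N * (A k + B k - 1)\<^sup>2 \<le> real N * (2 * (u\<^sup>2 + v\<^sup>2))"
    by (rule mult_left_mono) simp
  also have "\<dots> \<le> 2 * (real N - 1) * loss N A B P"
    using rows cols unfolding loss_def by (simp add: algebra_simps)
  finally show ?thesis
    using N by (simp add: field_simps)
qed

definition cross_matrix :: "nat \<Rightarrow> (nat \<Rightarrow> real) \<Rightarrow> (nat \<Rightarrow> real) \<Rightarrow> real \<Rightarrow> nat \<Rightarrow> nat \<Rightarrow> real" where
  "cross_matrix k A B \<epsilon> = (\<lambda>i j. if i \<noteq> k \<and> j \<noteq> k then 0
                              else if i \<noteq> k \<and> j = k then A i + \<epsilon>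
                              else if i = k \<and> j \<noteq> k then B j + \<epsilon>
                              else 0)"

lemma cross_matrix_transpose: "(\<lambda>i j. cross_matrix k A B \<epsilon> j i) = cross_matrix k B A \<epsilon>"
  unfolding cross_matrix_def by (auto simp: fun_eq_iff)

lemma piA_cross_matrix:
  assumes k: "k \<in> {1..N}"
  shows "piA N (cross_matrix k A B \<epsilon>) i =
    (if i = k then (\<Sum>j=1..N. B j) - B k + (real N - 1) * \<epsilon> else A i + \<epsilon>)"
proof (cases "i = k")
  case True
  have "piA N (cross_matrix k A B \<epsilon>) i = (\<Sum>j=1..N. if j = k then 0 else B j + \<epsilon>)"
    unfolding piA_def cross_matrix_def using True by (intro sum.cong) auto
  with True k show ?thesis
    by (simp add: sum_if_eq_else sum.distrib algebra_simps)
next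
  case False
  have "piA N (cross_matrix k A B \<epsilon>) i = (\<Sum>j=1..N. if j = k then A i + \<epsilon> else 0)"
    unfolding piA_def cross_matrix_def using False by (intro sum.cong) auto
  with False k show ?thesis
    by simp
qed

lemma piB_cross_matrix:
  assumes "k \<in> {1..N}"
  shows "piB N (cross_matrix k A B \<epsilon>) j =
    (if j = k then (\<Sum>i=1..N. A i) - A k + (real N - 1) * \<epsilon> else B j + \<epsilon>)"
  using piA_cross_matrix[OF assms]
  by (simp add: piB_eq_piA_transpose cross_matrix_transpose)

lemma jsp_matrix_cross_matrix:
  assumes k: "k \<in> {1..N}" and \<epsilon>: "\<epsilon> \<ge> 0"
    and Anonneg: "\<forall>i\<in>{1..N}. A i \<ge> 0" and Asum: "(\<Sum>i=1..N. A i) = 1"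
    and Bnonneg: "\<forall>i\<in>{1..N}. B i \<ge> 0" and Bsum: "(\<Sum>i=1..N. B i) = 1"
    and balance: "2 * (real N - 1) * \<epsilon> = A k + B k - 1"
  shows "jsp_matrix N (cross_matrix k A B \<epsilon>)"
proof -
  have "(\<Sum>i=1..N. \<Sum>j=1..N. cross_matrix k A B \<epsilon> i j) = (\<Sum>i=1..N. piA N (cross_matrix k A B \<epsilon>) i)"
    by (simp add: piA_def)
  also have "\<dots> = (\<Sum>i=1..N. if i = k then 1 - B k + (real N - 1) * \<epsilon> else A i + \<epsilon>)"
    by (simp only: piA_cross_matrix[OF k] Bsum)
  also have "\<dots> = (1 - B k + (real N - 1) * \<epsilon>) + 1 - A k + (real N - 1) * \<epsilon>"
    using k Asum by (simp add: sum_if_eq_else sum.distrib algebra_simps)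
  also have "\<dots> = 1"
    using balance by linarith
  finally show ?thesis
    unfolding jsp_matrix_def using Anonneg Bnonneg \<epsilon>
    by (auto simp: cross_matrix_def)
qed

lemma loss_cross_matrix:
  assumes k: "k \<in> {1..N}" and N: "N \<ge> 2"
    and Asum: "(\<Sum>i=1..N. A i) = 1" and Bsum: "(\<Sum>i=1..N. B i) = 1"
    and \<epsilon>: "\<epsilon> = (A k + B k - 1) / (2 * (real N - 1))"
  shows "loss N A B (cross_matrix k A B \<epsilon>) = real N / (2 * (real N - 1)) * (A k + B k - 1)\<^sup>2"
proof -
  define t where "t = A k + B k - 1"
  define c where "c = real N - 1"
  have c: "c > 0"
    using N by (simp add: c_def)
  have "1 - B k + c * \<epsilon> - A k = - t / 2" and "1 - A k + c * \<epsilon> - B k = - t / 2"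
    using c unfolding \<epsilon> t_def c_def by (simp_all add: field_simps)
  then have "piA N (cross_matrix k A B \<epsilon>) i - A i = (if i = k then - t / 2 else \<epsilon>)"
    and "piB N (cross_matrix k A B \<epsilon>) i - B i = (if i = k then - t / 2 else \<epsilon>)" for i
    by (simp_all only: piA_cross_matrix[OF k] piB_cross_matrix[OF k] Asum Bsum c_def) simp_all
  then have "loss N A B (cross_matrix k A B \<epsilon>) = 2 * ((t / 2)\<^sup>2 + c * \<epsilon>\<^sup>2)"
    unfolding loss_def using k by (simp add: if_distrib[of power2] sum_if_eq_else c_def algebra_simps)
  also have "\<dots> = (c + 1) / (2 * c) * t\<^sup>2"
    using c unfolding \<epsilon> t_def[symmetric] c_def[symmetric] by (simp add: field_simps power2_eq_square)
  finally show ?thesis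
    by (simp add: t_def c_def)
qed

lemma Lmin_eqI:
  assumes "jsp_matrix N P\<^sub>0" and "\<And>P. jsp_matrix N P \<Longrightarrow> loss N A B P\<^sub>0 \<le> loss N A B P"
  shows "Lmin N A B = loss N A B P\<^sub>0"
  unfolding Lmin_def by (rule cInf_eq_minimum) (use assms in auto)

theorem theorem2p2:
  fixes N :: nat and A B :: "nat \<Rightarrow> real"
  assumes N2: "N \<ge> 2"
    and Anonneg: "\<forall>i\<in>{1..N}. A i \<ge> 0" and Asum: "(\<Sum>i=1..N. A i) = 1"
    and Bnonneg: "\<forall>i\<in>{1..N}. B i \<ge> 0" and Bsum: "(\<Sum>i=1..N. B i) = 1"
  shows "((\<exists>i\<in>{1..N}. A i + B i > 1) \<longrightarrow>
            \<not> (\<exists>P. jsp_matrix N P \<and> loss N A B P = 0))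
       \<and> ((\<forall>i\<in>{1..N}. A i + B i \<le> A N + B N) \<and> A N + B N > 1 \<longrightarrow>
            (let \<epsilon> = (A N + B N - 1) / (2 * (real N - 1));
                 Pt = (\<lambda>i j. if i \<noteq> N \<and> j \<noteq> N then 0
                              else if i \<noteq> N \<and> j = N then A i + \<epsilon>
                              else if i = N \<and> j \<noteq> N then B j + \<epsilon>
                              else 0)
             in Lmin N A B = real N / (2 * (real N - 1)) * (A N + B N - 1)^2
                \<and> jsp_matrix N Pt
                \<and> loss N A B Pt = Lmin N A B))"
proof -
  have no_exact_fit: "\<not> (\<exists>P. jsp_matrix N P \<and> loss N A B P = 0)"
    if "k \<in> {1..N}" "A k + B k > 1" for k
    using that jsp_piA_plus_piB_le_1 by (fastforce simp: loss_eq_0_iff)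
  have "Lmin N A B = real N / (2 * (real N - 1)) * (A N + B N - 1)\<^sup>2
        \<and> jsp_matrix N (cross_matrix N A B \<epsilon>)
        \<and> loss N A B (cross_matrix N A B \<epsilon>) = Lmin N A B"
    if excess: "A N + B N > 1" and \<epsilon>: "\<epsilon> = (A N + B N - 1) / (2 * (real N - 1))" for \<epsilon>
  proof -
    have N: "N \<in> {1..N}"
      using N2 by simp
    have "2 * (real N - 1) * \<epsilon> = A N + B N - 1" and "\<epsilon> \<ge> 0"
      using N2 excess unfolding \<epsilon> by simp_all
    then have jsp: "jsp_matrix N (cross_matrix N A B \<epsilon>)"
      using jsp_matrix_cross_matrix N Anonneg Asum Bnonneg Bsum by blast
    have loss: "loss N A B (cross_matrix N A B \<epsilon>) = real N / (2 * (real N - 1)) * (A N + B N - 1)\<^sup>2"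
      using loss_cross_matrix N N2 Asum Bsum \<epsilon> by blast
    have "Lmin N A B = loss N A B (cross_matrix N A B \<epsilon>)"
      using loss_lower_bound[OF _ N N2 Asum Bsum] excess
      by (intro Lmin_eqI[OF jsp]) (simp add: loss)
    with jsp loss show ?thesis
      by simp
  qed
  then show ?thesis
    using no_exact_fit unfolding Let_def cross_matrix_def by blast
qed

end
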